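(* For every temporal graph with static graph $G=(V,E)$ and lifetime $T_{\max}$ and every $\delta$, there is a strategy for the Discoverer that wins the ideal patient zero game in $T_{\max}|V|$ rounds.
   Context: A temporal graph $\mathcal G=(V,E,\lambda)$ with lifetime $T_{\max}$ consists of a finite undirected static graph $(V,E)$ and a labeling $\lambda:E\to\{1,\dots,T_{\max}\}$; edge $e$ is present only at time $\lambda(e)$. Infection model with parameter $\delta\in\mathbb N^+$: a seed $(u,t)$ makes $u$ infected at time $t$; otherwise a susceptible node $u$ becomes infected at time $t$ iff some neighbour $v$ infectious at time $t$ has $\lambda(uv)=t$ (exactly one infector recorded if several exist). A node infected at time $t$ is infectious at times $t+1,\dots,t+\delta$ and resistant afterwards. In each round the Discoverer (who knows $V$ and $E$) submits seed infections and the Adversary returns a consistent infection log (triples $(u,v,t)$: $u$ infected $v$ at time $t$) under some labeling consistent with all previous answers. A node $v$ is an ideal patient zero with time $t$ (and $(v,t)$ an IPZ pair) if seed-infecting only $(v,t)$ causes every node to become infected. In the IPZ game the Discoverer finally submits a pair $(u,t)$ or $\bot$; it loses if the pair is not an IPZ pair or if it submits $\bot$ while an IPZ pair exists, for some labeling consistent with all logs; otherwise it wins. *)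

theory Defs
  imports Main
begin

text \<open>A labeling lam assigns to each
edge a time in {1..Tmax}; values of lam outside E are irrelevant.\<close>

definition static_graph :: "'v set \<Rightarrow> 'v set set \<Rightarrow> bool" where
  "static_graph V E \<longleftrightarrow> finite V \<and> (\<forall>e\<in>E. e \<subseteq> V \<and> card e = 2)"

definition valid_labeling :: "'v set set \<Rightarrow> nat \<Rightarrow> ('v set \<Rightarrow> nat) \<Rightarrow> bool" where
  "valid_labeling E Tmax lam \<longleftrightarrow> (\<forall>e\<in>E. lam e \<in> {1..Tmax})"

text \<open>itimes V E lam delta S n u = Some t iff u became infected at time t \<le> n
when the seed infections S are submitted (seeds only infect susceptible nodes).\<close>

primrec itimes :: "'v set \<Rightarrow> 'v set set \<Rightarrow> ('v set \<Rightarrow> nat) \<Rightarrow> nat \<Rightarrow> ('v \<times> nat) set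
    \<Rightarrow> nat \<Rightarrow> 'v \<Rightarrow> nat option" where
  "itimes V E lam delta S 0 =
     (\<lambda>u. if u \<in> V \<and> (u, 0) \<in> S then Some 0 else None)"
| "itimes V E lam delta S (Suc n) =
     (let f = itimes V E lam delta S n in
      (\<lambda>u. if f u \<noteq> None then f u
           else if u \<in> V \<and> ((u, Suc n) \<in> S \<or>
                  (\<exists>w s. f w = Some s \<and> s < Suc n \<and> Suc n \<le> s + delta
                         \<and> {u, w} \<in> E \<and> lam {u, w} = Suc n))
           then Some (Suc n) else None))"

definition infected_at :: "'v set \<Rightarrow> 'v set set \<Rightarrow> ('v set \<Rightarrow> nat) \<Rightarrow> nat \<Rightarrow> ('v \<times> nat) set
    \<Rightarrow> 'v \<Rightarrow> nat \<Rightarrow> bool" where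
  "infected_at V E lam delta S u t \<longleftrightarrow> (\<exists>n. itimes V E lam delta S n u = Some t)"

text \<open>A valid infection log for seeds S under labeling lam: a set of triples
(w,u,t) meaning w infected u at time t; every non-seed infection is recorded
with exactly one (arbitrary) infector that was infectious at that time and
adjacent via an edge labelled t. Seed infections are not recorded.\<close>

definition is_log :: "'v set \<Rightarrow> 'v set set \<Rightarrow> ('v set \<Rightarrow> nat) \<Rightarrow> nat \<Rightarrow> ('v \<times> nat) set
    \<Rightarrow> ('v \<times> 'v \<times> nat) set \<Rightarrow> bool" where
  "is_log V E lam delta S L \<longleftrightarrow>
     (\<forall>(w, u, t) \<in> L. infected_at V E lam delta S u t \<and> (u, t) \<notin> S \<and>
         {w, u} \<in> E \<and> lam {w, u} = t \<and>
         (\<exists>s. infected_at V E lam delta S w s \<and> s < t \<and> t \<le> s + delta)) \<and>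
     (\<forall>u t. infected_at V E lam delta S u t \<and> (u, t) \<notin> S \<longrightarrow> (\<exists>!w. (w, u, t) \<in> L))"

definition IPZ :: "'v set \<Rightarrow> 'v set set \<Rightarrow> ('v set \<Rightarrow> nat) \<Rightarrow> nat \<Rightarrow> 'v \<Rightarrow> nat \<Rightarrow> bool" where
  "IPZ V E lam delta v t \<longleftrightarrow>
     v \<in> V \<and> (\<forall>u\<in>V. \<exists>s. infected_at V E lam delta {(v, t)} u s)"

datatype 'v move = Query "('v \<times> nat) set" | Guess "('v \<times> nat) option"

type_synonym 'v history = "(('v \<times> nat) set \<times> ('v \<times> 'v \<times> nat) set) list"

type_synonym 'v strategy = "'v history \<Rightarrow> 'v move"

definition consistent :: "'v set \<Rightarrow> 'v set set \<Rightarrow> nat \<Rightarrow> nat \<Rightarrow> ('v set \<Rightarrow> nat)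
    \<Rightarrow> 'v history \<Rightarrow> bool" where
  "consistent V E Tmax delta lam h \<longleftrightarrow> valid_labeling E Tmax lam \<and>
     (\<forall>(S, L) \<in> set h. is_log V E lam delta S L)"

definition generated :: "'v strategy \<Rightarrow> 'v history \<Rightarrow> bool" where
  "generated strat h \<longleftrightarrow> (\<forall>i < length h. strat (take i h) = Query (fst (h ! i)))"

fun correct_guess :: "'v set \<Rightarrow> 'v set set \<Rightarrow> ('v set \<Rightarrow> nat) \<Rightarrow> nat
    \<Rightarrow> ('v \<times> nat) option \<Rightarrow> bool" where
  "correct_guess V E lam delta None = (\<not> (\<exists>v t. IPZ V E lam delta v t))"
| "correct_guess V E lam delta (Some (v, t)) = IPZ V E lam delta v t"

text \<open>The strategy wins within k rounds: along every play against an Adversary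
whose answers are consistent with some labeling, the Discoverer submits only finite
seed sets, submits at most k of them, and its final answer is correct for every
labeling consistent with all logs.\<close>

definition wins_within :: "'v set \<Rightarrow> 'v set set \<Rightarrow> nat \<Rightarrow> nat \<Rightarrow> 'v strategy \<Rightarrow> nat \<Rightarrow> bool" where
  "wins_within V E Tmax delta strat k \<longleftrightarrow>
     (\<forall>h. generated strat h \<and> (\<exists>lam. consistent V E Tmax delta lam h) \<longrightarrow>
        (case strat h of
           Query S \<Rightarrow> finite S \<and> length h < k
         | Guess a \<Rightarrow> (\<forall>lam. consistent V E Tmax delta lam h \<longrightarrow> correct_guess V E lam delta a)))"

end

theory Submission
  imports Defs
begin

text \<open>The Discoverer seeds every pair (v, t) with t < Tmax in a round of its own. The log
of a single-seed round lists exactly the non-seed infections, so it shows whether (v, t)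
is an ideal patient zero under every labeling consistent with it. A seed at a time
t \<ge> Tmax can infect nobody, since every edge is present at some time \<le> Tmax; hence such
a pair is ideal only when V is a singleton, which the Discoverer knows in advance.\<close>

definition log_infects_all :: "'v set \<Rightarrow> 'v \<Rightarrow> ('v \<times> 'v \<times> nat) set \<Rightarrow> bool" where
  "log_infects_all V v L \<longleftrightarrow> v \<in> V \<and> (\<forall>u \<in> V - {v}. \<exists>w s. (w, u, s) \<in> L)"

lemma infected_at_seed:
  assumes "u \<in> V" "(u, n) \<in> S"
  shows "\<exists>s. infected_at V E lam delta S u s"
proof -
  have "itimes V E lam delta S n u \<noteq> None"
    using assms by (cases n) (auto simp: Let_def)
  then show ?thesis
    unfolding infected_at_def by blast
qed

lemma IPZ_singleton: "IPZ {v} E lam delta v t"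
  unfolding IPZ_def using infected_at_seed[of v "{v}" t] by simp

lemma IPZ_iff_log_infects_all:
  assumes "is_log V E lam delta {(v, t)} L"
  shows "IPZ V E lam delta v t \<longleftrightarrow> log_infects_all V v L"
proof -
  have logged: "infected_at V E lam delta {(v, t)} u s" if "(w, u, s) \<in> L" for w u s
    using assms that unfolding is_log_def by fast
  have unlogged: "\<exists>w. (w, u, s) \<in> L"
    if "infected_at V E lam delta {(v, t)} u s" "u \<noteq> v" for u s
    using assms that unfolding is_log_def by blast
  show ?thesis
    unfolding IPZ_def log_infects_all_def
    using logged unlogged infected_at_seed[of v V t "{(v, t)}"] by blast
qed

lemma itimes_late_seed:
  assumes "valid_labeling E Tmax lam" "Tmax \<le> t"
    and "itimes V E lam delta {(v, t)} n u = Some s"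
  shows "u = v \<and> s = t"
  using assms(3)
proof (induction n arbitrary: u s)
  case 0
  then show ?case by (auto split: if_splits)
next
  case (Suc n)
  let ?f = "itimes V E lam delta {(v, t)} n"
  have no_spread: "\<not> (?f w = Some r \<and> r < Suc n \<and> {u, w} \<in> E \<and> lam {u, w} = Suc n)" for w r
  proof
    assume w: "?f w = Some r \<and> r < Suc n \<and> {u, w} \<in> E \<and> lam {u, w} = Suc n"
    then have "r = t" using Suc.IH by blast
    moreover have "lam {u, w} \<le> Tmax"
      using w assms(1) unfolding valid_labeling_def by auto
    ultimately show False using w assms(2) by simp
  qed
  show ?case
    using Suc.prems Suc.IH no_spread by (auto simp: Let_def split: if_splits)
qed

lemma IPZ_late_seed:
  assumes "valid_labeling E Tmax lam" "Tmax \<le> t" "IPZ V E lam delta v t"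
  shows "V = {v}"
  using assms(3) itimes_late_seed[OF assms(1,2)]
  unfolding IPZ_def infected_at_def by blast

definition probe_list :: "'v set \<Rightarrow> nat \<Rightarrow> ('v \<times> nat) list" where
  "probe_list V Tmax = List.product (SOME xs. set xs = V \<and> distinct xs) [0..<Tmax]"

lemma
  assumes "finite V"
  shows set_probe_list: "set (probe_list V Tmax) = V \<times> {..<Tmax}"
    and length_probe_list: "length (probe_list V Tmax) = Tmax * card V"
proof -
  have "\<exists>xs. set xs = V \<and> distinct xs"
    using finite_distinct_list[OF assms] by blast
  then obtain xs where "set xs = V" "distinct xs" "probe_list V Tmax = List.product xs [0..<Tmax]"
    unfolding probe_list_def by (metis (mono_tags, lifting) someI_ex)
  then show "set (probe_list V Tmax) = V \<times> {..<Tmax}"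
    and "length (probe_list V Tmax) = Tmax * card V"
    by (auto simp: distinct_card[symmetric])
qed

definition probe_verdict :: "'v set \<Rightarrow> nat \<Rightarrow> (('v \<times> nat) \<times> ('v \<times> 'v \<times> nat) set) list
    \<Rightarrow> ('v \<times> nat) option" where
  "probe_verdict V Tmax A =
     (case find (\<lambda>((v, t), L). log_infects_all V v L) A of
        Some (p, _) \<Rightarrow> Some p
      | None \<Rightarrow> if card V = 1 then Some (the_elem V, Tmax) else None)"

definition probe_strategy :: "'v set \<Rightarrow> nat \<Rightarrow> 'v strategy" where
  "probe_strategy V Tmax h =
     (if length h < length (probe_list V Tmax) then Query {probe_list V Tmax ! length h}
      else Guess (probe_verdict V Tmax (zip (probe_list V Tmax) (map snd h))))"

lemma probe_verdict_correct:
  assumes "valid_labeling E Tmax lam"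
    and probed: "V \<times> {..<Tmax} \<subseteq> fst ` set A"
    and logs: "\<And>p L. (p, L) \<in> set A \<Longrightarrow> is_log V E lam delta {p} L"
  shows "correct_guess V E lam delta (probe_verdict V Tmax A)"
proof (cases "find (\<lambda>((v, t), L). log_infects_all V v L) A")
  case (Some a)
  then obtain v t L where a: "a = ((v, t), L)" "((v, t), L) \<in> set A" "log_infects_all V v L"
    unfolding find_Some_iff by (metis case_prod_conv nth_mem prod.exhaust)
  then have "IPZ V E lam delta v t"
    using IPZ_iff_log_infects_all[OF logs[OF a(2)]] a(3) by simp
  then show ?thesis
    using Some a(1) by (simp add: probe_verdict_def)
next
  case None
  have early_not_IPZ: "\<not> IPZ V E lam delta v t" if early: "t < Tmax" for v t
  proof
    assume IPZ: "IPZ V E lam delta v t"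
    then obtain L where "((v, t), L) \<in> set A"
      using probed early unfolding IPZ_def by force
    then show False
      using None logs IPZ IPZ_iff_log_infects_all unfolding find_None_iff by fastforce
  qed
  have "V = {v}" if "IPZ V E lam delta v t" for v t
    using IPZ_late_seed[OF assms(1)] early_not_IPZ that not_le by blast
  then show ?thesis
    using None IPZ_singleton by (auto simp: probe_verdict_def card_1_singleton_iff)
qed

lemma generated_probe_strategy:
  assumes "generated (probe_strategy V Tmax) h"
  shows "length h \<le> length (probe_list V Tmax)"
    and "\<And>i. i < length h \<Longrightarrow> fst (h ! i) = {probe_list V Tmax ! i}"
proof -
  have query: "probe_strategy V Tmax (take i h) = Query (fst (h ! i))" if "i < length h" for i
    using assms that unfolding generated_def by blast
  show "length h \<le> length (probe_list V Tmax)"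
    using query[of "length (probe_list V Tmax)"] by (force simp: probe_strategy_def)
  show "fst (h ! i) = {probe_list V Tmax ! i}" if "i < length h" for i
    using query[OF that] that by (simp add: probe_strategy_def split: if_splits)
qed

lemma probe_answers_are_logs:
  assumes "generated (probe_strategy V Tmax) h" "consistent V E Tmax delta lam h"
    and "(p, L) \<in> set (zip (probe_list V Tmax) (map snd h))"
  shows "is_log V E lam delta {p} L"
proof -
  obtain i where i: "i < length h" "p = probe_list V Tmax ! i" "L = snd (h ! i)"
    using assms(3) by (auto simp: set_zip)
  then have "(fst (h ! i), L) \<in> set h"
    by simp
  then show ?thesis
    using assms(2) generated_probe_strategy(2)[OF assms(1) i(1)] i(2)
    unfolding consistent_def by auto
qed

theorem mainTheorem10:
  fixes V :: "'v set" and E :: "'v set set" and Tmax delta :: nat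
  assumes "static_graph V E" and "delta \<ge> 1"
  shows "\<exists>strat. wins_within V E Tmax delta strat (Tmax * card V)"
proof -
  (* only the finiteness of V is used *)
  let ?q = "probe_list V Tmax"
  have fin: "finite V" using assms(1) by (simp add: static_graph_def)
  have "case probe_strategy V Tmax h of
          Query S \<Rightarrow> finite S \<and> length h < Tmax * card V
        | Guess a \<Rightarrow> (\<forall>lam. consistent V E Tmax delta lam h \<longrightarrow> correct_guess V E lam delta a)"
    if gen: "generated (probe_strategy V Tmax) h" for h
  proof (cases "length h < length ?q")
    case True
    then show ?thesis by (simp add: probe_strategy_def length_probe_list[OF fin])
  next
    case False
    then have "length h = length ?q" using generated_probe_strategy(1)[OF gen] by simp
    then have probed: "fst ` set (zip ?q (map snd h)) = V \<times> {..<Tmax}"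
      by (simp flip: set_map add: set_probe_list[OF fin])
    have "correct_guess V E lam delta (probe_verdict V Tmax (zip ?q (map snd h)))"
      if "consistent V E Tmax delta lam h" for lam
    proof (rule probe_verdict_correct)
      show "valid_labeling E Tmax lam" using that by (simp add: consistent_def)
    qed (use probed probe_answers_are_logs[OF gen that] in auto)
    then show ?thesis
      using False by (simp add: probe_strategy_def)
  qed
  then show ?thesis
    unfolding wins_within_def by blast
qed

end
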